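(* Let $\eta$ be a homogeneous integrable 2-form of degree two on $\mathbb{C}^4$ such that, with $\nu=dz_1\wedge\cdots\wedge dz_4$ and $X$ defined by $d\eta=i_X\nu$, one has $X\not\equiv0$ and $\eta=i_Yi_X\nu$ for some linear vector field $Y$. Let $R=\sum_j z_j\,\partial/\partial z_j$ and $\omega=i_R\eta$. Then for every $s\in\mathbb{C}$ the 2-form $\eta_s=\eta+s\,d\omega$ is integrable; more precisely $\eta_s\wedge\eta_s=0$, $d\eta_s=i_X\nu$ and $i_X\eta_s=0$.
   Context: A form is homogeneous of degree $m$ if its coefficients are homogeneous polynomials of degree $m$. A holomorphic $q$-form $\eta$ is integrable if every point $p$ outside its zero set has a neighborhood $V$ with holomorphic 1-forms $\omega_1,\dots,\omega_q$ on $V$ such that $\eta|_V=\omega_1\wedge\cdots\wedge\omega_q$ and $d\omega_j\wedge\eta=0$ for all $j$. *)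

theory Defs
  imports "HOL-Analysis.Analysis"
begin

text \<open>A form is given by its coefficient functions: the coefficient of
dz_{i_1} wedge ... wedge dz_{i_k} (i_1 < ... < i_k) is  alpha {i_1,...,i_k}.\<close>

type_synonym 'n cform = "'n set \<Rightarrow> complex^'n \<Rightarrow> complex"

definition form_deg :: "nat \<Rightarrow> ('n::{finite,linorder}) cform \<Rightarrow> bool" where
  "form_deg k \<alpha> \<longleftrightarrow> (\<forall>S. card S \<noteq> k \<longrightarrow> \<alpha> S = (\<lambda>_. 0))"

text \<open>sign of dz_A wedge dz_B = sgn A B * dz_(A union B) for disjoint A, B\<close>
definition sgn_pair :: "('n::{finite,linorder}) set \<Rightarrow> 'n set \<Rightarrow> complex" where
  "sgn_pair A B = (-1) ^ card {(a,b). a \<in> A \<and> b \<in> B \<and> b < a}"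

definition wedge :: "('n::{finite,linorder}) cform \<Rightarrow> 'n cform \<Rightarrow> 'n cform" where
  "wedge \<alpha> \<beta> = (\<lambda>S z. \<Sum>A\<in>Pow S. sgn_pair A (S - A) * \<alpha> A z * \<beta> (S - A) z)"

definition unit_form :: "('n::{finite,linorder}) cform" where
  "unit_form = (\<lambda>S z. if S = {} then 1 else 0)"

fun wedge_list :: "('n::{finite,linorder}) cform list \<Rightarrow> 'n cform" where
  "wedge_list [] = unit_form"
| "wedge_list (\<omega> # \<omega>s) = wedge \<omega> (wedge_list \<omega>s)"

definition cpartial :: "(complex^('n::finite) \<Rightarrow> complex) \<Rightarrow> 'n \<Rightarrow> complex^'n \<Rightarrow> complex" where
  "cpartial f i z = deriv (\<lambda>t. f (\<chi> j. z$j + (if j = i then t else 0))) 0"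

definition ext_d :: "('n::{finite,linorder}) cform \<Rightarrow> 'n cform" where
  "ext_d \<alpha> = (\<lambda>S z. \<Sum>i\<in>S. sgn_pair {i} (S - {i}) * cpartial (\<alpha> (S - {i})) i z)"

definition interior :: "(complex^('n::{finite,linorder}) \<Rightarrow> complex^('n::{finite,linorder})) \<Rightarrow> ('n::{finite,linorder}) cform \<Rightarrow> ('n::{finite,linorder}) cform" where
  "interior X \<alpha> = (\<lambda>T z. \<Sum>i\<in>UNIV - T. sgn_pair {i} T * (X z)$i * \<alpha> (insert i T) z)"

definition vol_form :: "('n::{finite,linorder}) cform" where
  "vol_form = (\<lambda>S z. if S = UNIV then 1 else 0)"

definition holo_on :: "(complex^('n::finite) \<Rightarrow> complex) \<Rightarrow> (complex^'n) set \<Rightarrow> bool" where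
  "holo_on f V \<longleftrightarrow> (\<forall>p\<in>V. \<exists>L. (f has_derivative L) (at p) \<and>
      (\<forall>c v. L (\<chi> j. c * v$j) = c * L v))"

definition holo_form_on :: "('n::{finite,linorder}) cform \<Rightarrow> (complex^('n::{finite,linorder})) set \<Rightarrow> bool" where
  "holo_form_on \<alpha> V \<longleftrightarrow> (\<forall>S. holo_on (\<alpha> S) V)"

definition zero_set :: "('n::{finite,linorder}) cform \<Rightarrow> (complex^('n::{finite,linorder})) set" where
  "zero_set \<eta> = {p. \<forall>S. \<eta> S p = 0}"

definition integrable_form :: "nat \<Rightarrow> ('n::{finite,linorder}) cform \<Rightarrow> bool" where
  "integrable_form q \<eta> \<longleftrightarrow>
     (\<forall>p. p \<notin> zero_set \<eta> \<longrightarrow>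
        (\<exists>V \<omega>s. open V \<and> p \<in> V \<and> length \<omega>s = q \<and>
           (\<forall>\<omega>\<in>set \<omega>s. form_deg 1 \<omega> \<and> holo_form_on \<omega> V) \<and>
           (\<forall>S. \<forall>z\<in>V. \<eta> S z = wedge_list \<omega>s S z) \<and>
           (\<forall>\<omega>\<in>set \<omega>s. \<forall>S. \<forall>z\<in>V. wedge (ext_d \<omega>) \<eta> S z = 0)))"

definition homog_deg2_form :: "('n::{finite,linorder}) cform \<Rightarrow> bool" where
  "homog_deg2_form \<eta> \<longleftrightarrow>
     (\<forall>S. \<exists>a::'n \<Rightarrow> 'n \<Rightarrow> complex. \<forall>z. \<eta> S z = (\<Sum>k\<in>UNIV. \<Sum>l\<in>UNIV. a k l * z$k * z$l))"

definition linear_vf :: "(complex^('n::finite) \<Rightarrow> complex^'n) \<Rightarrow> bool" where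
  "linear_vf Y \<longleftrightarrow> (\<exists>B::'n \<Rightarrow> 'n \<Rightarrow> complex. \<forall>z i. (Y z)$i = (\<Sum>k\<in>UNIV. B i k * z$k))"

end

theory Submission
  imports Defs
begin

text \<open>Since \<open>d\<eta>\<close> has linear coefficients, \<open>X = A z\<close> is linear; write \<open>Y = B z\<close>.  For linear
fields \<open>d (i\<^sub>Y i\<^sub>X \<nu>) = i\<^sub>U \<nu>\<close> with \<open>U = [Y,X] + (div Y) X - (div X) Y\<close>, so \<open>d\<eta> = i\<^sub>X \<nu>\<close> means
\<open>U = X\<close>; taking traces gives \<open>tr A = 0\<close>, and then \<open>[X,Y] = (tr B - 1) X\<close>.  The Euler field
satisfies \<open>d (i\<^sub>R \<eta>) = 4 \<eta> - i\<^sub>R i\<^sub>X \<nu>\<close>, so \<open>\<eta>\<^sub>s = i\<^sub>Y\<^sub>s i\<^sub>X \<nu>\<close> for the linear field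
\<open>Y\<^sub>s = (1 + 4s) Y - s R\<close>, which satisfies the same two relations as \<open>Y\<close>.  Hence \<open>\<eta>\<^sub>s\<close> is
decomposable, \<open>d\<eta>\<^sub>s = i\<^sub>X \<nu>\<close> and \<open>i\<^sub>X \<eta>\<^sub>s = 0\<close>.  Near a point where the coefficient
\<open>\<eta>\<^sub>x\<^sub>y\<close> does not vanish, \<open>\<eta>\<^sub>s = (i\<^bsub>\<partial>\<^sub>x\<^esub> \<eta>\<^sub>s / \<eta>\<^sub>x\<^sub>y) \<and> i\<^bsub>\<partial>\<^sub>y\<^esub> \<eta>\<^sub>s\<close>, and the Frobenius
condition for these factors only involves \<open>3 \<times> 3\<close> minors of \<open>X, Y\<^sub>s, [X,Y\<^sub>s]\<close>, which vanish
because \<open>[X,Y\<^sub>s]\<close> is a multiple of \<open>X\<close>.\<close>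

type_synonym 'n vector_field = "complex^'n \<Rightarrow> complex^'n"

lemma sgn_pair_empty_left [simp]: "sgn_pair {} B = 1"
  unfolding sgn_pair_def by simp

lemma sgn_pair_empty_right [simp]: "sgn_pair A {} = 1"
  unfolding sgn_pair_def by simp

lemma sgn_pair_sq: "sgn_pair A B * sgn_pair A B = 1"
  unfolding sgn_pair_def by (simp only: power_mult_distrib[symmetric]) simp

definition count_below :: "'n::linorder \<Rightarrow> 'n set \<Rightarrow> nat" where
  "count_below x B = card {y\<in>B. y < x}"

lemma count_below_empty [simp]: "count_below x {} = 0"
  by (simp add: count_below_def)

lemma count_below_insert:
  assumes "finite U"
  shows "count_below x (insert u U) =
    (if u < x \<and> u \<notin> U then Suc (count_below x U) else count_below x U)"
proof (cases "u < x \<and> u \<notin> U")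
  case True
  then have "{y\<in>insert u U. y < x} = insert u {y\<in>U. y < x}" by auto
  then show ?thesis using True assms unfolding count_below_def by simp
next
  case False
  then have "{y\<in>insert u U. y < x} = {y\<in>U. y < x}" by auto
  then show ?thesis using False unfolding count_below_def by simp
qed

lemma sgn_pair_insert:
  fixes x :: "'n::{finite,linorder}"
  assumes "x \<notin> A"
  shows "sgn_pair (insert x A) B = (-1) ^ count_below x B * sgn_pair A B"
proof -
  have split: "{(a,b). a \<in> insert x A \<and> b \<in> B \<and> b < a} =
     Pair x ` {y\<in>B. y < x} \<union> {(a,b). a \<in> A \<and> b \<in> B \<and> b < a}" by auto
  have "card {(a,b). a \<in> insert x A \<and> b \<in> B \<and> b < a} =
     card (Pair x ` {y\<in>B. y < x}) + card {(a,b). a \<in> A \<and> b \<in> B \<and> b < a}"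
    unfolding split by (rule card_Un_disjoint) (use assms in auto)
  also have "card (Pair x ` {y\<in>B. y < x}) = card {y\<in>B. y < x}"
    by (rule card_image) (auto simp: inj_on_def)
  finally show ?thesis unfolding sgn_pair_def count_below_def by (simp add: power_add)
qed

lemma sum_Pow_insert:
  assumes "finite A" "x \<notin> A"
  shows "(\<Sum>B\<in>Pow (insert x A). f B) = (\<Sum>B\<in>Pow A. f B) + (\<Sum>B\<in>Pow A. f (insert x B))"
proof -
  have "Pow A \<inter> insert x ` Pow A = {}" using assms by auto
  moreover have "inj_on (insert x) (Pow A)" using assms unfolding inj_on_def
    by (metis Diff_insert_absorb PowD subset_iff)
  ultimately show ?thesis using assms
    by (simp add: Pow_insert sum.union_disjoint sum.reindex)
qed

lemma vol_form_eq_card: "vol_form S z = (if card S = CARD('n) then 1 else (0::complex))"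
  for S :: "'n::{finite,linorder} set"
proof -
  have "(S = UNIV) = (card S = CARD('n))"
    using card_eq_UNIV_imp_eq_UNIV[of S] by auto
  then show ?thesis unfolding vol_form_def by simp
qed

lemma interior_apply:
  "interior X \<alpha> T = (\<lambda>z. \<Sum>i\<in>UNIV - T. sgn_pair {i} T * (X z)$i * \<alpha> (insert i T) z)"
  by (simp add: interior_def)

lemma ext_d_apply:
  "ext_d \<alpha> S = (\<lambda>z. \<Sum>i\<in>S. sgn_pair {i} (S - {i}) * cpartial (\<alpha> (S - {i})) i z)"
  by (simp add: ext_d_def)

lemma wedge_apply:
  "wedge \<alpha> \<beta> S = (\<lambda>z. \<Sum>A\<in>Pow S. sgn_pair A (S - A) * \<alpha> A z * \<beta> (S - A) z)"
  by (simp add: wedge_def)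

lemma interior_vol_form_complement:
  "interior X vol_form (UNIV - {i}) z = sgn_pair {i} (UNIV - {i}) * X z $ i"
proof -
  have "UNIV - (UNIV - {i}) = {i}" by auto
  then show ?thesis unfolding interior_def vol_form_def by (simp add: insert_absorb)
qed

lemma interior_vol_form_inject:
  assumes "interior X vol_form = interior Y vol_form"
  shows "X = Y"
proof (intro ext iffD2[OF vec_eq_iff] allI)
  fix z i
  have "sgn_pair {i} (UNIV - {i}) * X z $ i = sgn_pair {i} (UNIV - {i}) * Y z $ i"
    using assms by (metis interior_vol_form_complement)
  then have "sgn_pair {i} (UNIV - {i}) * (sgn_pair {i} (UNIV - {i}) * X z $ i) =
     sgn_pair {i} (UNIV - {i}) * (sgn_pair {i} (UNIV - {i}) * Y z $ i)" by simp
  then show "X z $ i = Y z $ i" by (simp add: mult.assoc[symmetric] sgn_pair_sq)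
qed

lemma interior_lincomb_field:
  "interior (\<lambda>z. p *s V z - q *s W z) \<alpha> T z = p * interior V \<alpha> T z - q * interior W \<alpha> T z"
  unfolding interior_def by (simp add: sum_distrib_left sum_subtractf algebra_simps)

lemma wedge_unit_form_right: "wedge \<alpha> unit_form = \<alpha>"
proof (intro ext)
  fix S z
  have "wedge \<alpha> unit_form S z = (\<Sum>A\<in>Pow S. if A = S then \<alpha> A z else 0)"
    unfolding wedge_def unit_form_def by (intro sum.cong refl) auto
  also have "\<dots> = \<alpha> S z" by (simp add: sum.delta)
  finally show "wedge \<alpha> unit_form S z = \<alpha> S z" .
qed

lemma wedge_divide_left: "wedge (\<lambda>S z. \<alpha> S z / g z) \<beta> S z = wedge \<alpha> \<beta> S z / g z"
  unfolding wedge_def by (simp add: sum_divide_distrib)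

definition coord_shift :: "complex^'n \<Rightarrow> 'n \<Rightarrow> complex \<Rightarrow> complex^'n" where
  "coord_shift z i t = (\<chi> j. z$j + (if j = i then t else 0))"

lemma coord_shift_0 [simp]: "coord_shift z i 0 = z"
  by (simp add: coord_shift_def vec_eq_iff)

lemma coord_shift_nth [simp]: "coord_shift z i t $ k = z$k + (if k = i then t else 0)"
  by (simp add: coord_shift_def)

definition has_partials :: "(complex^'n \<Rightarrow> complex) \<Rightarrow> complex^'n \<Rightarrow> bool" where
  "has_partials f z \<longleftrightarrow> (\<forall>i. (\<lambda>t. f (coord_shift z i t)) field_differentiable (at 0))"

lemma cpartial_eq:
  "((\<lambda>t. f (coord_shift z i t)) has_field_derivative D) (at 0) \<Longrightarrow> cpartial f i z = D"
  by (simp add: cpartial_def coord_shift_def DERIV_imp_deriv)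

lemma has_partials_DERIV:
  "has_partials f z \<Longrightarrow> ((\<lambda>t. f (coord_shift z i t)) has_field_derivative cpartial f i z) (at 0)"
  unfolding has_partials_def cpartial_def coord_shift_def[symmetric]
  using field_differentiable_derivI by blast

lemma has_partialsI:
  "(\<And>i. \<exists>D. ((\<lambda>t. f (coord_shift z i t)) has_field_derivative D) (at 0)) \<Longrightarrow> has_partials f z"
  unfolding has_partials_def field_differentiable_def by blast

lemma has_partials_const [simp]: "has_partials (\<lambda>z. k) z"
  by (rule has_partialsI) (auto intro: DERIV_const)

lemma cpartial_const [simp]: "cpartial (\<lambda>z. k) i z = 0"
  by (rule cpartial_eq) (simp add: DERIV_const)

lemma DERIV_coord_shift_nth:
  "((\<lambda>t. coord_shift z i t $ k) has_field_derivative (if k = i then 1 else 0)) (at 0)"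
proof (cases "k = i")
  case True
  then show ?thesis by (simp, intro derivative_eq_intros) auto
qed simp

lemma has_partials_nth [simp]: "has_partials (\<lambda>z. z$k) z"
  using DERIV_coord_shift_nth by (intro has_partialsI) blast

lemma cpartial_nth [simp]: "cpartial (\<lambda>z. z$k) i z = (if k = i then 1 else 0)"
  by (rule cpartial_eq) (rule DERIV_coord_shift_nth)

lemma matrix_vector_mult_coord_shift: "(M *v coord_shift z i t) $ k = (M *v z)$k + M$k$i * t"
proof -
  have "(M *v coord_shift z i t) $ k = (M *v z)$k + (\<Sum>j\<in>UNIV. M$k$j * (if j = i then t else 0))"
    by (simp add: matrix_vector_mult_def algebra_simps sum.distrib)
  also have "(\<Sum>j\<in>UNIV. M$k$j * (if j = i then t else 0)) = M$k$i * t"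
    by (simp add: if_distrib sum.delta cong: if_cong)
  finally show ?thesis .
qed

lemma DERIV_matrix_vector_mult_coord_shift:
  "((\<lambda>t. (M *v coord_shift z i t) $ k) has_field_derivative M$k$i) (at 0)"
  unfolding matrix_vector_mult_coord_shift by (intro derivative_eq_intros) auto

lemma has_partials_matrix_vector_mult [simp]: "has_partials (\<lambda>z. (M *v z)$k) z"
  using DERIV_matrix_vector_mult_coord_shift by (intro has_partialsI) blast

lemma cpartial_matrix_vector_mult [simp]: "cpartial (\<lambda>z. (M *v z)$k) i z = M$k$i"
  by (rule cpartial_eq) (rule DERIV_matrix_vector_mult_coord_shift)

lemma has_partials_add [simp]:
  "has_partials f z \<Longrightarrow> has_partials g z \<Longrightarrow> has_partials (\<lambda>z. f z + g z) z"
  by (rule has_partialsI) (rule exI, rule DERIV_add; erule has_partials_DERIV)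

lemma cpartial_add [simp]: "has_partials f z \<Longrightarrow> has_partials g z \<Longrightarrow>
   cpartial (\<lambda>z. f z + g z) i z = cpartial f i z + cpartial g i z"
  by (rule cpartial_eq) (rule DERIV_add; erule has_partials_DERIV)

lemma has_partials_diff [simp]:
  "has_partials f z \<Longrightarrow> has_partials g z \<Longrightarrow> has_partials (\<lambda>z. f z - g z) z"
  by (rule has_partialsI) (rule exI, rule DERIV_diff; erule has_partials_DERIV)

lemma cpartial_diff [simp]: "has_partials f z \<Longrightarrow> has_partials g z \<Longrightarrow>
   cpartial (\<lambda>z. f z - g z) i z = cpartial f i z - cpartial g i z"
  by (rule cpartial_eq) (rule DERIV_diff; erule has_partials_DERIV)

lemma has_partials_minus [simp]: "has_partials f z \<Longrightarrow> has_partials (\<lambda>z. - f z) z"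
  by (rule has_partialsI) (rule exI, rule DERIV_minus; erule has_partials_DERIV)

lemma cpartial_minus [simp]: "has_partials f z \<Longrightarrow> cpartial (\<lambda>z. - f z) i z = - cpartial f i z"
  by (rule cpartial_eq) (rule DERIV_minus; erule has_partials_DERIV)

lemma has_partials_mult [simp]:
  "has_partials f z \<Longrightarrow> has_partials g z \<Longrightarrow> has_partials (\<lambda>z. f z * g z) z"
  by (rule has_partialsI) (rule exI, rule DERIV_mult; erule has_partials_DERIV)

lemma cpartial_mult [simp]:
  assumes "has_partials f z" "has_partials g z"
  shows "cpartial (\<lambda>z. f z * g z) i z = cpartial f i z * g z + f z * cpartial g i z"
proof -
  have "((\<lambda>t. f (coord_shift z i t) * g (coord_shift z i t)) has_field_derivative
      cpartial f i z * g (coord_shift z i 0) + cpartial g i z * f (coord_shift z i 0)) (at 0)"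
    by (rule DERIV_mult) (use assms has_partials_DERIV in auto)
  then show ?thesis by (intro cpartial_eq) (simp add: mult.commute)
qed

lemma cpartial_divide:
  assumes "has_partials f z" "has_partials g z" "g z \<noteq> 0"
  shows "cpartial (\<lambda>z. f z / g z) i z = (cpartial f i z * g z - cpartial g i z * f z) / (g z * g z)"
proof -
  have "((\<lambda>t. f (coord_shift z i t) / g (coord_shift z i t)) has_field_derivative
      (cpartial f i z * g (coord_shift z i 0) - f (coord_shift z i 0) * cpartial g i z) /
      (g (coord_shift z i 0) * g (coord_shift z i 0))) (at 0)"
    by (rule DERIV_divide) (use assms has_partials_DERIV in auto)
  then show ?thesis by (intro cpartial_eq) (simp add: mult.commute)
qed

lemma has_partials_sum [simp]:
  "(\<And>j. j \<in> I \<Longrightarrow> has_partials (f j) z) \<Longrightarrow> has_partials (\<lambda>z. \<Sum>j\<in>I. f j z) z"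
  by (rule has_partialsI) (rule exI, rule DERIV_sum, rule has_partials_DERIV, blast)

lemma cpartial_sum: "(\<And>j. j \<in> I \<Longrightarrow> has_partials (f j) z) \<Longrightarrow>
   cpartial (\<lambda>z. \<Sum>j\<in>I. f j z) i z = (\<Sum>j\<in>I. cpartial (f j) i z)"
  by (rule cpartial_eq) (rule DERIV_sum, rule has_partials_DERIV, blast)

lemma cpartial_quadratic_form:
  fixes q :: "'n::finite \<Rightarrow> 'n \<Rightarrow> complex"
  shows "cpartial (\<lambda>z. \<Sum>k\<in>UNIV. \<Sum>l\<in>UNIV. q k l * z$k * z$l) i z = (\<Sum>k\<in>UNIV. (q i k + q k i) * z$k)"
proof -
  have "cpartial (\<lambda>z. \<Sum>k\<in>UNIV. \<Sum>l\<in>UNIV. q k l * z$k * z$l) i z =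
     (\<Sum>k\<in>UNIV. \<Sum>l\<in>UNIV. (if k = i then q k l * z$l else 0) + (if l = i then q k l * z$k else 0))"
    by (simp add: cpartial_sum) (intro sum.cong refl; simp)
  also have "\<dots> = (\<Sum>l\<in>UNIV. q i l * z$l) + (\<Sum>k\<in>UNIV. q k i * z$k)"
  proof -
    have "(\<Sum>l\<in>UNIV. if k = i then q k l * z$l else 0) = (if k = i then \<Sum>l\<in>UNIV. q k l * z$l else 0)"
      for k by auto
    then show ?thesis by (simp add: sum.distrib sum.delta)
  qed
  also have "\<dots> = (\<Sum>k\<in>UNIV. (q i k + q k i) * z$k)"
    by (simp add: sum.distrib algebra_simps)
  finally show ?thesis .
qed

lemma form_deg_zero: "form_deg k (\<lambda>S z. 0)"
  unfolding form_deg_def by simp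

lemma form_deg_vol_form: "form_deg CARD('n) (vol_form :: ('n::{finite,linorder}) cform)"
  unfolding form_deg_def vol_form_def by auto

lemma form_deg_interior:
  fixes \<alpha> :: "('n::{finite,linorder}) cform"
  assumes "form_deg (Suc k) \<alpha>"
  shows "form_deg k (interior X \<alpha>)"
  unfolding form_deg_def
proof (intro allI impI)
  fix T :: "'n set" assume "card T \<noteq> k"
  then have "\<alpha> (insert i T) = (\<lambda>_. 0)" if "i \<in> UNIV - T" for i
    using assms that unfolding form_deg_def by (simp add: card_insert_if)
  then show "interior X \<alpha> T = (\<lambda>_. 0)" unfolding interior_apply by (simp add: fun_eq_iff)
qed

lemma form_deg_ext_d:
  fixes \<alpha> :: "('n::{finite,linorder}) cform"
  assumes "form_deg k \<alpha>"
  shows "form_deg (Suc k) (ext_d \<alpha>)"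
  unfolding form_deg_def
proof (intro allI impI)
  fix S :: "'n set" assume S: "card S \<noteq> Suc k"
  have "\<alpha> (S - {i}) = (\<lambda>_. 0)" if "i \<in> S" for i
  proof -
    have "card (S - {i}) = card S - 1" "card S \<ge> 1"
      using that by (auto simp: card_Diff_singleton Suc_leI card_gt_0_iff intro: Suc_leI)
    then have "card (S - {i}) \<noteq> k" using S by auto
    then show ?thesis using assms unfolding form_deg_def by auto
  qed
  then show "ext_d \<alpha> S = (\<lambda>_. 0)" unfolding ext_d_apply by (intro ext sum.neutral ballI) simp
qed

lemma form_deg_wedge:
  fixes \<alpha> \<beta> :: "('n::{finite,linorder}) cform"
  assumes "form_deg k \<alpha>" "form_deg m \<beta>"
  shows "form_deg (k + m) (wedge \<alpha> \<beta>)"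
  unfolding form_deg_def
proof (intro allI impI)
  fix S :: "'n set" assume S: "card S \<noteq> k + m"
  have "\<alpha> A = (\<lambda>_. 0) \<or> \<beta> (S - A) = (\<lambda>_. 0)" if "A \<subseteq> S" for A
  proof -
    have "card A + card (S - A) = card S"
      using that by (metis card_Diff_subset card_mono finite le_add_diff_inverse finite_subset)
    then have "card A \<noteq> k \<or> card (S - A) \<noteq> m" using S by auto
    then show ?thesis using assms unfolding form_deg_def by auto
  qed
  then show "wedge \<alpha> \<beta> S = (\<lambda>_. 0)" unfolding wedge_apply
    by (auto simp: fun_eq_iff intro!: sum.neutral) blast
qed

lemma form_deg_ext_d_1form: "form_deg 1 \<alpha> \<Longrightarrow> form_deg 2 (ext_d \<alpha>)"
  using form_deg_ext_d[of 1 \<alpha>] by (simp add: numeral_2_eq_2)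

lemma form_deg_ext_d_2form: "form_deg 2 \<alpha> \<Longrightarrow> form_deg 3 (ext_d \<alpha>)"
  using form_deg_ext_d[of 2 \<alpha>] by (simp add: numeral_3_eq_3 numeral_2_eq_2)

lemma form_deg_divide: "form_deg k \<alpha> \<Longrightarrow> form_deg k (\<lambda>S z. \<alpha> S z / g z)"
  unfolding form_deg_def by (simp add: fun_eq_iff)

lemma form_deg_cmult: "form_deg k \<alpha> \<Longrightarrow> form_deg k (\<lambda>S z. c * \<alpha> S z)"
  unfolding form_deg_def by (simp add: fun_eq_iff)

lemma form_deg_diff: "form_deg k \<alpha> \<Longrightarrow> form_deg k \<beta> \<Longrightarrow> form_deg k (\<lambda>S z. \<alpha> S z - \<beta> S z)"
  unfolding form_deg_def by (simp add: fun_eq_iff)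

lemma form_eqI:
  assumes "form_deg k \<alpha>" "form_deg k \<beta>" "\<And>S z. card S = k \<Longrightarrow> \<alpha> S z = \<beta> S z"
  shows "\<alpha> = \<beta>"
proof (intro ext)
  fix S z show "\<alpha> S z = \<beta> S z"
    using assms unfolding form_deg_def by (cases "card S = k") (auto simp: fun_eq_iff)
qed

definition fun_form :: "(complex^('n::{finite,linorder}) \<Rightarrow> complex) \<Rightarrow> 'n cform" where
  "fun_form g = (\<lambda>S. if S = {} then g else (\<lambda>_. 0))"

lemma form_deg_fun_form: "form_deg 0 (fun_form g)"
  unfolding form_deg_def fun_form_def by auto

lemma form_deg_ext_d_fun_form: "form_deg 1 (ext_d (fun_form g))"
  using form_deg_ext_d[OF form_deg_fun_form] by simp

lemma ext_d_fun_form_singleton: "ext_d (fun_form g) {p} z = cpartial g p z"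
  by (simp add: ext_d_apply fun_form_def)

lemma ext_d_pair:
  assumes "p < q"
  shows "ext_d \<alpha> {p,q} z = cpartial (\<alpha> {q}) p z - cpartial (\<alpha> {p}) q z"
  using assms less_imp_neq[OF assms] not_less_iff_gr_or_eq
  by (simp add: ext_d_def sgn_pair_insert count_below_insert insert_Diff_if)

lemma wedge_pair:
  assumes "p < q" "form_deg 1 \<alpha>" "form_deg 1 \<beta>"
  shows "wedge \<alpha> \<beta> {p,q} z = \<alpha> {p} z * \<beta> {q} z - \<alpha> {q} z * \<beta> {p} z"
  using assms less_imp_neq[OF assms(1)] not_less_iff_gr_or_eq unfolding form_deg_def
  by (simp add: wedge_def sgn_pair_insert count_below_insert insert_Diff_if sum_Pow_insert card_insert_if Pow_empty)

definition holo_at :: "(complex^'n \<Rightarrow> complex) \<Rightarrow> complex^'n \<Rightarrow> bool" where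
  "holo_at f p \<longleftrightarrow> (\<exists>L. (f has_derivative L) (at p) \<and> (\<forall>c v. L (\<chi> j. c * v$j) = c * L v))"

lemma holo_onI: "(\<And>p. p \<in> V \<Longrightarrow> holo_at f p) \<Longrightarrow> holo_on f V"
  unfolding holo_on_def holo_at_def by blast

lemma holo_at_isCont: "holo_at f p \<Longrightarrow> isCont f p"
  unfolding holo_at_def using has_derivative_continuous by blast

lemma holo_at_const [simp]: "holo_at (\<lambda>z. k) p"
  unfolding holo_at_def by (intro exI[of _ "\<lambda>_. 0"]) auto

lemma holo_at_nth [simp]: "holo_at (\<lambda>z. z$k) p"
  unfolding holo_at_def
  by (intro exI[of _ "\<lambda>v. v$k"]) (auto intro: bounded_linear.has_derivative[OF bounded_linear_vec_nth] has_derivative_ident)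

lemma holo_at_add [simp]:
  assumes "holo_at f p" "holo_at g p"
  shows "holo_at (\<lambda>z. f z + g z) p"
proof -
  obtain L M where "(f has_derivative L) (at p)" "(g has_derivative M) (at p)"
    and "\<forall>c v. L (\<chi> j. c * v $ j) = c * L v" "\<forall>c v. M (\<chi> j. c * v $ j) = c * M v"
    using assms unfolding holo_at_def by blast
  then show ?thesis unfolding holo_at_def
    by (intro exI[of _ "\<lambda>v. L v + M v"] conjI allI has_derivative_add) (auto simp: distrib_left)
qed

lemma holo_at_diff [simp]:
  assumes "holo_at f p" "holo_at g p"
  shows "holo_at (\<lambda>z. f z - g z) p"
proof -
  obtain L M where "(f has_derivative L) (at p)" "(g has_derivative M) (at p)"
    and "\<forall>c v. L (\<chi> j. c * v $ j) = c * L v" "\<forall>c v. M (\<chi> j. c * v $ j) = c * M v"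
    using assms unfolding holo_at_def by blast
  then show ?thesis unfolding holo_at_def
    by (intro exI[of _ "\<lambda>v. L v - M v"] conjI allI has_derivative_diff) (auto simp: right_diff_distrib)
qed

lemma holo_at_minus [simp]: "holo_at f p \<Longrightarrow> holo_at (\<lambda>z. - f z) p"
  using holo_at_diff[of "\<lambda>_. 0" p f] by simp

lemma holo_at_mult [simp]:
  assumes "holo_at f p" "holo_at g p"
  shows "holo_at (\<lambda>z. f z * g z) p"
proof -
  obtain L M where f: "(f has_derivative L) (at p)" and g: "(g has_derivative M) (at p)"
    and l: "\<forall>c v. L (\<chi> j. c * v $ j) = c * L v" and m: "\<forall>c v. M (\<chi> j. c * v $ j) = c * M v"
    using assms unfolding holo_at_def by blast
  show ?thesis unfolding holo_at_def
    by (intro exI conjI allI, rule has_derivative_mult[OF f g]) (simp only: l m, simp add: algebra_simps)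
qed

lemma holo_at_divide:
  assumes "holo_at f p" "holo_at g p" "g p \<noteq> 0"
  shows "holo_at (\<lambda>z. f z / g z) p"
proof -
  obtain L M where f: "(f has_derivative L) (at p)" and g: "(g has_derivative M) (at p)"
    and l: "\<forall>c v. L (\<chi> j. c * v $ j) = c * L v" and m: "\<forall>c v. M (\<chi> j. c * v $ j) = c * M v"
    using assms unfolding holo_at_def by blast
  show ?thesis unfolding holo_at_def
    by (intro exI conjI allI, rule has_derivative_divide[OF f g assms(3)])
      (simp only: l m, simp add: algebra_simps)
qed

lemma holo_at_sum [simp]: "(\<And>j. j \<in> I \<Longrightarrow> holo_at (f j) p) \<Longrightarrow> holo_at (\<lambda>z. \<Sum>j\<in>I. f j z) p"
proof (induction I rule: infinite_finite_induct)
  case (insert x F)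
  then have "holo_at (\<lambda>z. f x z + (\<Sum>j\<in>F. f j z)) p" by (intro holo_at_add) auto
  then show ?case using insert by simp
qed auto

lemma holo_at_matrix_vector_mult [simp]: "holo_at (\<lambda>z. (M *v z)$k) p"
  unfolding matrix_vector_mult_def by simp

lemma holo_at_interior2_vol: "holo_at (interior (\<lambda>z. B *v z) (interior (\<lambda>z. A *v z) vol_form) S) p"
  unfolding interior_apply vol_form_def by simp

lemma holo_at_interior3_vol:
  "holo_at (interior (\<lambda>_. e) (interior (\<lambda>z. B *v z) (interior (\<lambda>z. A *v z) vol_form)) S) p"
  unfolding interior_apply vol_form_def by simp

lemma has_partials_interior2_vol:
  "has_partials (interior (\<lambda>z. B *v z) (interior (\<lambda>z. A *v z) vol_form) S) p"
  unfolding interior_apply vol_form_def by simp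

lemma has_partials_interior3_vol:
  "has_partials (interior (\<lambda>_. e) (interior (\<lambda>z. B *v z) (interior (\<lambda>z. A *v z) vol_form)) S) p"
  unfolding interior_apply vol_form_def by simp

lemma linear_vf_matrix: "linear_vf Y \<Longrightarrow> \<exists>B. Y = (\<lambda>z. B *v z)"
  unfolding linear_vf_def
proof (elim exE)
  fix B assume "\<forall>z i. Y z $ i = (\<Sum>k\<in>UNIV. B i k * z $ k)"
  then have "Y = (\<lambda>z. (\<chi> i k. B i k) *v z)"
    by (auto simp: fun_eq_iff vec_eq_iff matrix_vector_mult_def)
  then show ?thesis by blast
qed

lemma ext_d_homog_deg2_linear_field:
  fixes \<eta> :: "('n::{finite,linorder}) cform"
  assumes "homog_deg2_form \<eta>" and d\<eta>: "ext_d \<eta> = interior X vol_form"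
  shows "\<exists>A. X = (\<lambda>z. A *v z)"
proof -
  obtain q where "\<forall>S z. \<eta> S z = (\<Sum>k\<in>UNIV. \<Sum>l\<in>UNIV. q S k l * z$k * z$l)"
    using choice[OF assms(1)[unfolded homog_deg2_form_def]] by blast
  then have q: "\<And>S. \<eta> S = (\<lambda>z. \<Sum>k\<in>UNIV. \<Sum>l\<in>UNIV. q S k l * z$k * z$l)"
    by auto
  define C where "C i k = sgn_pair {i} (UNIV - {i}) * (\<Sum>j\<in>UNIV - {i}. sgn_pair {j} (UNIV - {i} - {j}) *
      (q (UNIV - {i} - {j}) j k + q (UNIV - {i} - {j}) k j))" for i k
  have "X z $ i = (\<Sum>k\<in>UNIV. C i k * z$k)" for z i
  proof -
    have "X z $ i = sgn_pair {i} (UNIV - {i}) * ext_d \<eta> (UNIV - {i}) z"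
      using d\<eta> interior_vol_form_complement[of X i z] sgn_pair_sq[of "{i}" "UNIV - {i}"]
      by (simp add: mult.assoc[symmetric])
    also have "\<dots> = (\<Sum>j\<in>UNIV - {i}. \<Sum>k\<in>UNIV. sgn_pair {i} (UNIV - {i}) *
        sgn_pair {j} (UNIV - {i} - {j}) * (q (UNIV - {i} - {j}) j k + q (UNIV - {i} - {j}) k j) * z$k)"
      unfolding ext_d_def q cpartial_quadratic_form by (simp add: sum_distrib_left mult.assoc)
    also have "\<dots> = (\<Sum>k\<in>UNIV. C i k * z$k)"
      unfolding C_def by (subst sum.swap) (simp add: sum_distrib_left sum_distrib_right mult_ac)
    finally show ?thesis .
  qed
  then have "X = (\<lambda>z. (\<chi> i k. C i k) *v z)"
    by (auto simp: fun_eq_iff vec_eq_iff matrix_vector_mult_def)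
  then show ?thesis by blast
qed

text \<open>For \<open>X = A z\<close> and \<open>Y = B z\<close>, \<open>div_bracket_field B A\<close> is the field
  \<open>[Y,X] + (div Y) X - (div X) Y\<close> and \<open>lin_bracket A B z\<close> is \<open>[X,Y]\<close> at \<open>z\<close>.\<close>

definition div_bracket_field ::
    "complex^'n^'n \<Rightarrow> complex^'n^'n \<Rightarrow> complex^('n::finite) \<Rightarrow> complex^'n" where
  "div_bracket_field B A z = (\<chi> k. (\<Sum>j\<in>UNIV. A$k$j * (B *v z)$j) - (\<Sum>j\<in>UNIV. B$k$j * (A *v z)$j)
     + trace B * (A *v z)$k - trace A * (B *v z)$k)"

abbreviation lin_bracket ::
    "complex^'n^'n \<Rightarrow> complex^'n^'n \<Rightarrow> complex^('n::finite) \<Rightarrow> 'n \<Rightarrow> complex" where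
  "lin_bracket A B z \<equiv> (\<lambda>k. (\<Sum>j\<in>UNIV. B$k$j * (A *v z)$j) - (\<Sum>j\<in>UNIV. A$k$j * (B *v z)$j))"

lemma trace_eq_0_if_div_bracket_field_eq:
  fixes A B :: "complex^('n::finite)^'n"
  assumes R: "\<And>z. div_bracket_field B A z = A *v z"
  shows "trace A = 0"
proof -
  have e: "(\<Sum>j\<in>UNIV. A$i$j * B$j$i) - (\<Sum>j\<in>UNIV. B$i$j * A$j$i) + trace B * A$i$i - trace A * B$i$i = A$i$i" for i
    using R[of "axis i 1"] unfolding vec_eq_iff div_bracket_field_def
    by (auto simp: matrix_vector_mult_def axis_def if_distrib sum.delta cong: if_cong)
  have s1: "(\<Sum>i\<in>UNIV. (\<Sum>j\<in>UNIV. A$i$j * B$j$i) - (\<Sum>j\<in>UNIV. B$i$j * A$j$i)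
      + trace B * A$i$i - trace A * B$i$i) = (\<Sum>i\<in>UNIV. A$i$i)"
    by (rule sum.cong[OF refl e])
  have "trace A = (\<Sum>i\<in>UNIV. (\<Sum>j\<in>UNIV. A$i$j * B$j$i) - (\<Sum>j\<in>UNIV. B$i$j * A$j$i)
      + trace B * A$i$i - trace A * B$i$i)"
    unfolding s1 by (simp add: trace_def)
  also have "\<dots> = (\<Sum>i\<in>UNIV. \<Sum>j\<in>UNIV. A$i$j * B$j$i) - (\<Sum>i\<in>UNIV. \<Sum>j\<in>UNIV. B$i$j * A$j$i)
      + trace B * trace A - trace A * trace B"
    by (simp add: sum.distrib sum_subtractf sum_distrib_left trace_def)
  also have "(\<Sum>i\<in>UNIV. \<Sum>j\<in>UNIV. B$i$j * A$j$i) = (\<Sum>i\<in>UNIV. \<Sum>j\<in>UNIV. A$i$j * B$j$i)"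
    by (subst sum.swap) (simp add: mult.commute)
  finally show ?thesis by simp
qed

text \<open>The matrix of \<open>(1 + 4s) Y - s R\<close> for \<open>Y = B z\<close> and the Euler field \<open>R\<close>.\<close>

definition deform_matrix :: "complex \<Rightarrow> complex^('n::finite)^'n \<Rightarrow> complex^'n^'n" where
  "deform_matrix s B = (\<chi> i j. (1 + 4 * s) * B$i$j - s * (if i = j then 1 else 0))"

lemma deform_matrix_mult: "deform_matrix s B *v z = (1 + 4 * s) *s (B *v z) - s *s z"
proof -
  have "(deform_matrix s B *v z) $ i = ((1 + 4 * s) *s (B *v z) - s *s z) $ i" for i
  proof -
    have "(deform_matrix s B *v z) $ i =
        (\<Sum>j\<in>UNIV. (1 + 4 * s) * (B$i$j * z$j) - (if i = j then s * z$j else 0))"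
      unfolding matrix_vector_mult_def by (simp, intro sum.cong) (auto simp: deform_matrix_def algebra_simps)
    also have "\<dots> = (1 + 4 * s) * (B *v z)$i - s * z$i"
      by (simp add: sum_subtractf sum_distrib_left matrix_vector_mult_def sum.delta)
    finally show ?thesis by (simp add: algebra_simps)
  qed
  then show ?thesis by (simp add: vec_eq_iff)
qed

lemma sum_mult_deform_matrix_right:
  "(\<Sum>j\<in>UNIV. A$k$j * (deform_matrix s B *v z)$j) =
     (1 + 4 * s) * (\<Sum>j\<in>UNIV. A$k$j * (B *v z)$j) - s * (A *v z)$k"
proof -
  have "(\<Sum>j\<in>UNIV. A$k$j * (deform_matrix s B *v z)$j) =
      (\<Sum>j\<in>UNIV. (1 + 4 * s) * (A$k$j * (B *v z)$j) - s * (A$k$j * z$j))"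
    by (intro sum.cong) (auto simp: deform_matrix_mult algebra_simps)
  then show ?thesis by (simp only: sum_subtractf sum_distrib_left matrix_vector_mult_def vec_lambda_beta)
qed

lemma sum_deform_matrix_mult_left:
  "(\<Sum>j\<in>UNIV. deform_matrix s B$k$j * (A *v z)$j) =
     (1 + 4 * s) * (\<Sum>j\<in>UNIV. B$k$j * (A *v z)$j) - s * (A *v z)$k"
proof -
  have "(\<Sum>j\<in>UNIV. deform_matrix s B$k$j * (A *v z)$j) =
      (\<Sum>j\<in>UNIV. (1 + 4 * s) * (B$k$j * (A *v z)$j) - (if k = j then s * (A *v z)$j else 0))"
    by (intro sum.cong) (auto simp: deform_matrix_def algebra_simps)
  then show ?thesis by (simp add: sum_subtractf sum_distrib_left sum.delta)
qed

lemma trace_deform_matrix: "trace (deform_matrix s B) = (1 + 4 * s) * trace B - s * of_nat CARD('n)"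
  for B :: "complex^('n::finite)^'n"
  unfolding deform_matrix_def trace_def by (simp add: sum_subtractf sum_distrib_left)

lemma div_bracket_field_eq_iff:
  assumes "trace A = 0"
  shows "div_bracket_field B A z = A *v z \<longleftrightarrow> lin_bracket A B z = (\<lambda>k. (trace B - 1) * (A *v z)$k)"
  using assms by (auto simp: vec_eq_iff fun_eq_iff div_bracket_field_def algebra_simps)

lemma
  fixes A B :: "complex^'n^('n::finite)"
  assumes "CARD('n) = 4" "trace A = 0" and R: "\<And>z. div_bracket_field B A z = A *v z"
  shows div_bracket_field_deform_matrix: "div_bracket_field (deform_matrix s B) A z = A *v z"
    and lin_bracket_deform_matrix:
      "lin_bracket A (deform_matrix s B) z = (\<lambda>k. ((1 + 4 * s) * (trace B - 1)) * (A *v z)$k)"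
proof -
  have r: "lin_bracket A B z = (\<lambda>k. (trace B - 1) * (A *v z)$k)"
    using R div_bracket_field_eq_iff[OF assms(2)] by blast
  show l: "lin_bracket A (deform_matrix s B) z = (\<lambda>k. ((1 + 4 * s) * (trace B - 1)) * (A *v z)$k)"
  proof
    fix k
    have e: "(\<Sum>j\<in>UNIV. A$k$j * (B *v z)$j) = (\<Sum>j\<in>UNIV. B$k$j * (A *v z)$j) - (trace B - 1) * (A *v z)$k"
      using fun_cong[OF r, of k] by (simp add: algebra_simps)
    show "lin_bracket A (deform_matrix s B) z k = ((1 + 4 * s) * (trace B - 1)) * (A *v z)$k"
      by (simp only: sum_mult_deform_matrix_right sum_deform_matrix_mult_left e) (simp add: algebra_simps)
  qed
  have tr: "trace (deform_matrix s B) - 1 = (1 + 4 * s) * (trace B - 1)"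
    using assms(1) by (simp add: trace_deform_matrix algebra_simps)
  show "div_bracket_field (deform_matrix s B) A z = A *v z"
    by (simp only: div_bracket_field_eq_iff[OF assms(2)] l tr)
qed

definition det3 ::
    "('n \<Rightarrow> complex) \<Rightarrow> ('n \<Rightarrow> complex) \<Rightarrow> ('n \<Rightarrow> complex) \<Rightarrow> 'n \<Rightarrow> 'n \<Rightarrow> 'n \<Rightarrow> complex" where
  "det3 p q r i j k =
    p i * (q j * r k - q k * r j) - p j * (q i * r k - q k * r i) + p k * (q i * r j - q j * r i)"

locale enum4 =
  fixes a b c d :: "'n::{finite,linorder}"
  assumes a_less_b: "a < b" and b_less_c: "b < c" and c_less_d: "c < d"
    and UNIV_eq: "UNIV = {a, b, c, d}"
begin

lemma order_facts:
  "a < b" "b < c" "c < d" "a < c" "a < d" "b < d"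
  "a \<noteq> b" "a \<noteq> c" "a \<noteq> d" "b \<noteq> c" "b \<noteq> d" "c \<noteq> d"
  "b \<noteq> a" "c \<noteq> a" "d \<noteq> a" "c \<noteq> b" "d \<noteq> b" "d \<noteq> c"
  "\<not> b < a" "\<not> c < a" "\<not> d < a" "\<not> c < b" "\<not> d < b" "\<not> d < c"
  "\<not> a < a" "\<not> b < b" "\<not> c < c" "\<not> d < d"
  using a_less_b b_less_c c_less_d by auto

lemma card_UNIV_eq_4: "CARD('n) = 4"
  using order_facts by (simp add: UNIV_eq)

lemmas coeff_simps = order_facts card_UNIV_eq_4 UNIV_eq sgn_pair_insert count_below_insert
  vol_form_eq_card insert_Diff_if interior_apply

lemmas coeff_wedge_simps = coeff_simps ext_d_apply wedge_apply sum_Pow_insert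

lemma subset_cases:
  "S = {} \<or> S = {a} \<or> S = {b} \<or> S = {c} \<or> S = {d} \<or> S = {a,b} \<or> S = {a,c} \<or> S = {a,d} \<or>
   S = {b,c} \<or> S = {b,d} \<or> S = {c,d} \<or> S = {a,b,c} \<or> S = {a,b,d} \<or> S = {a,c,d} \<or> S = {b,c,d} \<or>
   S = {a,b,c,d}"
proof -
  have filter_insert: "{y \<in> insert u U. P y} = (if P u then insert u {y\<in>U. P y} else {y\<in>U. P y})"
    and filter_empty: "{y \<in> {}. P y} = {}" for u U and P :: "'n \<Rightarrow> bool"
    by auto
  have "{x \<in> {a,b,c,d}. x \<in> S} = S" using UNIV_eq by auto
  then show ?thesis
    by (cases "a\<in>S"; cases "b\<in>S"; cases "c\<in>S"; cases "d\<in>S";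
        simp only: filter_insert filter_empty if_True if_False simp_thms)
qed

lemma card_1_cases: "card S = 1 \<Longrightarrow> S = {a} \<or> S = {b} \<or> S = {c} \<or> S = {d}"
  using subset_cases[of S] by (elim disjE) (simp_all add: order_facts)

lemma card_2_cases:
  "card S = 2 \<Longrightarrow> S = {a,b} \<or> S = {a,c} \<or> S = {a,d} \<or> S = {b,c} \<or> S = {b,d} \<or> S = {c,d}"
  using subset_cases[of S] by (elim disjE) (simp_all add: order_facts)

lemma card_3_cases: "card S = 3 \<Longrightarrow> S = {a,b,c} \<or> S = {a,b,d} \<or> S = {a,c,d} \<or> S = {b,c,d}"
  using subset_cases[of S] by (elim disjE) (simp_all add: order_facts)

lemma card_4_cases: "card S = 4 \<Longrightarrow> S = {a,b,c,d}"
  using subset_cases[of S] by (elim disjE) (simp_all add: order_facts)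

lemma form_deg_vol4: "form_deg 4 (vol_form :: 'n cform)"
  using form_deg_vol_form card_UNIV_eq_4 by metis

lemma form_deg_interior_vol: "form_deg 3 (interior (X :: 'n vector_field) vol_form)"
  using form_deg_interior[of 3 vol_form X] form_deg_vol4 by simp

lemma form_deg_interior2_vol: "form_deg 2 (interior (Y :: 'n vector_field) (interior X vol_form))"
  using form_deg_interior[of 2 _ Y] form_deg_interior_vol by simp

lemma form_deg_interior3_vol:
  "form_deg 1 (interior (Z :: 'n vector_field) (interior Y (interior X vol_form)))"
  using form_deg_interior[of 1 _ Z] form_deg_interior2_vol by (simp add: numeral_2_eq_2)

lemma wedge_2forms:
  fixes \<alpha> \<beta> :: "'n cform"
  assumes "form_deg 2 \<alpha>" "form_deg 2 \<beta>"
  shows "wedge \<alpha> \<beta> {a,b,c,d} z =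
    \<alpha> {a,b} z * \<beta> {c,d} z - \<alpha> {a,c} z * \<beta> {b,d} z + \<alpha> {a,d} z * \<beta> {b,c} z +
    \<alpha> {b,c} z * \<beta> {a,d} z - \<alpha> {b,d} z * \<beta> {a,c} z + \<alpha> {c,d} z * \<beta> {a,b} z"
  using assms unfolding form_deg_def by (simp add: coeff_wedge_simps card_insert_if)

lemma ext_d_interior2_vol:
  fixes A B :: "((complex,'n) vec, 'n) vec"
  shows "ext_d (interior (\<lambda>z. B *v z) (interior (\<lambda>z. A *v z) vol_form)) =
    interior (div_bracket_field B A) vol_form" (is "?l = ?r")
proof (rule form_eqI[of 3])
  fix S :: "'n set" and z assume "card S = 3"
  from card_3_cases[OF this] show "?l S z = ?r S z"
    by (elim disjE; simp add: coeff_wedge_simps div_bracket_field_def trace_def)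
      (simp_all add: algebra_simps)
qed (rule form_deg_ext_d_2form form_deg_interior2_vol form_deg_interior_vol)+

lemma ext_d_interior_euler:
  fixes A B :: "((complex,'n) vec, 'n) vec"
  shows "ext_d (interior (\<lambda>z. z) (interior (\<lambda>z. B *v z) (interior (\<lambda>z. A *v z) vol_form))) =
    (\<lambda>S z. 4 * interior (\<lambda>z. B *v z) (interior (\<lambda>z. A *v z) vol_form) S z -
      interior (\<lambda>z. z) (interior (div_bracket_field B A) vol_form) S z)" (is "?l = ?r")
proof (rule form_eqI[of 2])
  fix S :: "'n set" and z assume "card S = 2"
  from card_2_cases[OF this] show "?l S z = ?r S z"
    by (elim disjE; simp add: coeff_simps ext_d_pair div_bracket_field_def trace_def)
      (simp_all add: UNIV_eq matrix_vector_mult_def order_facts algebra_simps)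
qed (intro form_deg_ext_d_1form form_deg_interior3_vol form_deg_diff form_deg_cmult
      form_deg_interior2_vol)+

lemma wedge_ext_d_contraction:
  fixes A B :: "((complex,'n) vec, 'n) vec"
  shows "wedge (ext_d (interior (\<lambda>_. axis x 1) (interior (\<lambda>z. B *v z) (interior (\<lambda>z. A *v z) vol_form))))
      (interior (\<lambda>z. B *v z) (interior (\<lambda>z. A *v z) vol_form)) {a,b,c,d} z =
    (if x = a then - det3 (\<lambda>k. (A *v z)$k) (\<lambda>k. (B *v z)$k) (lin_bracket A B z) b c d
     else if x = b then det3 (\<lambda>k. (A *v z)$k) (\<lambda>k. (B *v z)$k) (lin_bracket A B z) a c d
     else if x = c then - det3 (\<lambda>k. (A *v z)$k) (\<lambda>k. (B *v z)$k) (lin_bracket A B z) a b d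
     else det3 (\<lambda>k. (A *v z)$k) (\<lambda>k. (B *v z)$k) (lin_bracket A B z) a b c)"
proof -
  have "x = a \<or> x = b \<or> x = c \<or> x = d" using UNIV_eq by auto
  then show ?thesis
    unfolding wedge_2forms[OF form_deg_ext_d_1form[OF form_deg_interior3_vol] form_deg_interior2_vol]
    by (elim disjE; simp add: coeff_simps ext_d_pair axis_def det3_def) (simp_all add: algebra_simps)
qed

lemma wedge_ext_d_contraction_eq_0:
  fixes A B :: "((complex,'n) vec, 'n) vec"
  assumes "\<And>z. lin_bracket A B z = (\<lambda>k. \<kappa> * (A *v z)$k)"
  shows "wedge (ext_d (interior (\<lambda>_. axis x 1) (interior (\<lambda>z. B *v z) (interior (\<lambda>z. A *v z) vol_form))))
    (interior (\<lambda>z. B *v z) (interior (\<lambda>z. A *v z) vol_form)) {a,b,c,d} z = 0"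
  unfolding wedge_ext_d_contraction assms by (simp add: det3_def algebra_simps)

lemma wedge_self_decomposable:
  fixes V W :: "'n vector_field"
  shows "wedge (interior V (interior W vol_form)) (interior V (interior W vol_form)) = (\<lambda>S z. 0)"
    (is "?l = _")
proof (rule form_eqI[of 4])
  show "form_deg 4 ?l"
    using form_deg_wedge[OF form_deg_interior2_vol form_deg_interior2_vol] by simp
  fix S :: "'n set" and z assume "card S = 4"
  from card_4_cases[OF this] show "?l S z = 0"
    by (simp add: wedge_2forms form_deg_interior2_vol) (simp add: coeff_simps algebra_simps)
qed (rule form_deg_zero)

lemma interior_decomposable_self:
  fixes V W :: "'n vector_field"
  shows "interior W (interior V (interior W vol_form)) = (\<lambda>S z. 0)" (is "?l = _")
proof (rule form_eqI[of 1])
  fix S :: "'n set" and z assume "card S = 1"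
  from card_1_cases[OF this] show "?l S z = 0"
    by (elim disjE; simp add: coeff_simps) (simp_all add: algebra_simps)
qed (rule form_deg_interior3_vol form_deg_zero)+

lemma less_pair_cases:
  assumes "x < y"
  shows "(x = a \<and> y = b) \<or> (x = a \<and> y = c) \<or> (x = a \<and> y = d) \<or>
    (x = b \<and> y = c) \<or> (x = b \<and> y = d) \<or> (x = c \<and> y = d)"
proof -
  have "x \<in> {a,b,c,d}" "y \<in> {a,b,c,d}" using UNIV_eq by auto
  then show ?thesis using assms order_facts by auto
qed

lemma wedge_contractions_decomposable:
  fixes V W :: "'n vector_field"
  assumes "x < y" and "card S = 2"
  shows "wedge (interior (\<lambda>_. axis x 1) (interior V (interior W vol_form)))
      (interior (\<lambda>_. axis y 1) (interior V (interior W vol_form))) S z =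
    interior V (interior W vol_form) {x,y} z * interior V (interior W vol_form) S z"
  using less_pair_cases[OF assms(1)] card_2_cases[OF assms(2)]
  by (elim disjE conjE; simp add: wedge_pair[OF _ form_deg_interior3_vol form_deg_interior3_vol] order_facts)
    (simp_all add: coeff_simps axis_def algebra_simps)

lemma wedge_ext_d_divide:
  fixes \<alpha> :: "'n cform"
  assumes "form_deg 1 \<alpha>" "form_deg 2 \<eta>" "g z \<noteq> 0" "has_partials g z" "\<And>q. has_partials (\<alpha> {q}) z"
  shows "wedge (ext_d (\<lambda>S z. \<alpha> S z / g z)) \<eta> {a,b,c,d} z =
    wedge (ext_d \<alpha>) \<eta> {a,b,c,d} z / g z -
    wedge (wedge (ext_d (fun_form g)) \<alpha>) \<eta> {a,b,c,d} z / (g z * g z)"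
proof -
  have f1: "form_deg 2 (ext_d (\<lambda>S z. \<alpha> S z / g z))" and f2: "form_deg 2 (ext_d \<alpha>)"
    by (intro form_deg_ext_d_1form form_deg_divide assms(1))+
  have f3: "form_deg 2 (wedge (ext_d (fun_form g)) \<alpha>)"
    using form_deg_wedge[OF form_deg_ext_d_fun_form assms(1)] by (simp add: numeral_2_eq_2)
  show ?thesis
    using assms(3)
    by (simp only: wedge_2forms[OF f1 assms(2)] wedge_2forms[OF f2 assms(2)] wedge_2forms[OF f3 assms(2)])
      (simp add: ext_d_pair order_facts wedge_pair[OF _ form_deg_ext_d_fun_form assms(1)]
        ext_d_fun_form_singleton cpartial_divide assms field_simps)
qed

lemma wedge_wedge_contraction_decomposable:
  fixes V W :: "'n vector_field" and \<gamma> :: "'n cform"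
  assumes "form_deg 1 \<gamma>"
  shows "wedge (wedge \<gamma> (interior (\<lambda>_. axis y 1) (interior V (interior W vol_form))))
    (interior V (interior W vol_form)) {a,b,c,d} z = 0"
proof -
  have f: "form_deg 2 (wedge \<gamma> (interior (\<lambda>_. axis y 1) (interior V (interior W vol_form))))"
    using form_deg_wedge[OF assms form_deg_interior3_vol] by (simp add: numeral_2_eq_2)
  have "y = a \<or> y = b \<or> y = c \<or> y = d" using UNIV_eq by auto
  then show ?thesis
    unfolding wedge_2forms[OF f form_deg_interior2_vol]
    by (elim disjE; simp add: wedge_pair[OF _ assms form_deg_interior3_vol] order_facts)
      (simp_all add: coeff_simps axis_def algebra_simps)
qed

end
lemma form_deg_2_nonzero_pair:
  fixes \<eta> :: "('n::{finite,linorder}) cform"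
  assumes "form_deg 2 \<eta>" "\<eta> S p \<noteq> 0"
  obtains x y where "x < y" "\<eta> {x,y} p \<noteq> 0"
proof -
  have "card S = 2"
    using assms unfolding form_deg_def by metis
  then obtain x y where "S = {x,y}" "x \<noteq> y" by (auto simp: card_2_iff)
  then show thesis
    using that assms(2) by (cases "x < y") (auto simp: insert_commute neq_iff)
qed

context enum4
begin

lemma form_deg_4_eqI:
  assumes "form_deg 4 \<beta>" "\<beta> {a,b,c,d} z = 0"
  shows "\<beta> T z = 0"
proof (cases "card T = 4")
  case True
  then show ?thesis using assms(2) card_4_cases by simp
next
  case False
  then show ?thesis using assms(1) unfolding form_deg_def by simp
qed

lemma decomposable_eq_wedge_contractions:
  fixes V W :: "'n vector_field"
  defines "\<eta> \<equiv> interior V (interior W vol_form)"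
  assumes "x < y" "\<eta> {x,y} z \<noteq> 0"
  shows "\<eta> T z =
    wedge (\<lambda>S z. interior (\<lambda>_. axis x 1) \<eta> S z / \<eta> {x,y} z) (interior (\<lambda>_. axis y 1) \<eta>) T z"
proof (cases "card T = 2")
  case True
  then show ?thesis
    using wedge_contractions_decomposable[OF assms(2) True] assms(3)
    unfolding wedge_divide_left \<eta>_def by simp
next
  case False
  have "form_deg 2 (wedge (interior (\<lambda>_. axis x 1) \<eta>) (interior (\<lambda>_. axis y 1) \<eta>))"
    using form_deg_wedge[OF form_deg_interior3_vol form_deg_interior3_vol] unfolding \<eta>_def
    by (simp add: numeral_2_eq_2)
  then show ?thesis
    using False form_deg_interior2_vol unfolding wedge_divide_left form_deg_def \<eta>_def by simp
qed

lemma wedge_ext_d_contraction_factors_eq_0: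
  fixes A B :: "((complex,'n) vec, 'n) vec"
  defines "\<eta> \<equiv> interior (\<lambda>z. B *v z) (interior (\<lambda>z. A *v z) vol_form)"
  assumes bracket: "\<And>z. lin_bracket A B z = (\<lambda>k. \<kappa> * (A *v z)$k)" and "\<eta> {x,y} z \<noteq> 0"
  shows "wedge (ext_d (\<lambda>S z. interior (\<lambda>_. axis x 1) \<eta> S z / \<eta> {x,y} z)) \<eta> T z = 0"
    and "wedge (ext_d (interior (\<lambda>_. axis y 1) \<eta>)) \<eta> T z = 0"
proof -
  have deg4: "form_deg 4 (wedge (ext_d \<omega>) \<eta>)" if "form_deg 1 \<omega>" for \<omega>
    using form_deg_wedge[OF form_deg_ext_d_1form[OF that] form_deg_interior2_vol] unfolding \<eta>_def by simp
  have \<omega>\<^sub>1: "form_deg 1 (\<lambda>S z. interior (\<lambda>_. axis x 1) \<eta> S z / \<eta> {x,y} z)"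
    and \<omega>\<^sub>2: "form_deg 1 (interior (\<lambda>_. axis y 1) \<eta>)"
    unfolding \<eta>_def by (intro form_deg_divide form_deg_interior3_vol)+
  have "wedge (ext_d (\<lambda>S z. interior (\<lambda>_. axis x 1) \<eta> S z / \<eta> {x,y} z)) \<eta> {a,b,c,d} z =
      wedge (ext_d (interior (\<lambda>_. axis x 1) \<eta>)) \<eta> {a,b,c,d} z / \<eta> {x,y} z -
      wedge (wedge (ext_d (fun_form (\<eta> {x,y}))) (interior (\<lambda>_. axis x 1) \<eta>)) \<eta> {a,b,c,d} z /
        (\<eta> {x,y} z * \<eta> {x,y} z)"
    using assms(3) unfolding \<eta>_def
    by (intro wedge_ext_d_divide form_deg_interior3_vol form_deg_interior2_vol
        has_partials_interior2_vol has_partials_interior3_vol)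
  also have "\<dots> = 0"
    unfolding \<eta>_def
    by (simp add: wedge_ext_d_contraction_eq_0[OF bracket]
        wedge_wedge_contraction_decomposable[OF form_deg_ext_d_fun_form])
  finally show "wedge (ext_d (\<lambda>S z. interior (\<lambda>_. axis x 1) \<eta> S z / \<eta> {x,y} z)) \<eta> T z = 0"
    by (rule form_deg_4_eqI[OF deg4[OF \<omega>\<^sub>1]])
  show "wedge (ext_d (interior (\<lambda>_. axis y 1) \<eta>)) \<eta> T z = 0"
    by (rule form_deg_4_eqI[OF deg4[OF \<omega>\<^sub>2]])
      (unfold \<eta>_def, rule wedge_ext_d_contraction_eq_0[OF bracket])
qed

lemma integrable_decomposable:
  fixes A B :: "((complex,'n) vec, 'n) vec"
  defines "\<eta> \<equiv> interior (\<lambda>z. B *v z) (interior (\<lambda>z. A *v z) vol_form)"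
  assumes bracket: "\<And>z. lin_bracket A B z = (\<lambda>k. \<kappa> * (A *v z)$k)"
  shows "integrable_form 2 \<eta>"
  unfolding integrable_form_def
proof (intro allI impI)
  fix p assume "p \<notin> zero_set \<eta>"
  then obtain S where "\<eta> S p \<noteq> 0" unfolding zero_set_def by auto
  moreover have "form_deg 2 \<eta>" unfolding \<eta>_def by (rule form_deg_interior2_vol)
  ultimately obtain x y where xy: "x < y" and "\<eta> {x,y} p \<noteq> 0"
    using form_deg_2_nonzero_pair by blast
  define V where "V = {z. \<eta> {x,y} z \<noteq> 0}"
  define \<omega>\<^sub>1 where "\<omega>\<^sub>1 = (\<lambda>S z. interior (\<lambda>_. axis x 1) \<eta> S z / \<eta> {x,y} z)"
  define \<omega>\<^sub>2 where "\<omega>\<^sub>2 = interior (\<lambda>_. axis y 1) \<eta>"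
  have "continuous_on UNIV (\<eta> {x,y})"
    unfolding \<eta>_def by (intro continuous_at_imp_continuous_on ballI holo_at_isCont holo_at_interior2_vol)
  then have "open {z. \<eta> {x,y} z \<noteq> (\<lambda>_. 0) z}"
    by (rule open_Collect_neq) (rule continuous_on_const)
  then have "open V" unfolding V_def by simp
  have "p \<in> V" unfolding V_def using \<open>\<eta> {x,y} p \<noteq> 0\<close> by simp
  have deg: "form_deg 1 \<omega>\<^sub>1" "form_deg 1 \<omega>\<^sub>2"
    unfolding \<omega>\<^sub>1_def \<omega>\<^sub>2_def \<eta>_def by (intro form_deg_divide form_deg_interior3_vol)+
  have "holo_at (\<omega>\<^sub>1 T) q" "holo_at (\<omega>\<^sub>2 T) q" if "q \<in> V" for T q
    using that unfolding \<omega>\<^sub>1_def \<omega>\<^sub>2_def V_def \<eta>_def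
    by (auto intro!: holo_at_divide holo_at_interior3_vol holo_at_interior2_vol)
  then have holo: "holo_form_on \<omega>\<^sub>1 V" "holo_form_on \<omega>\<^sub>2 V"
    unfolding holo_form_on_def by (auto intro: holo_onI)
  have factor: "\<eta> T z = wedge_list [\<omega>\<^sub>1, \<omega>\<^sub>2] T z" if "z \<in> V" for T z
    using decomposable_eq_wedge_contractions[OF xy, of "\<lambda>z. B *v z" "\<lambda>z. A *v z" z T] that
    unfolding \<omega>\<^sub>1_def \<omega>\<^sub>2_def V_def \<eta>_def by (simp add: wedge_unit_form_right)
  have frobenius: "wedge (ext_d \<omega>\<^sub>1) \<eta> T z = 0" "wedge (ext_d \<omega>\<^sub>2) \<eta> T z = 0" if "z \<in> V" for T z
    using that wedge_ext_d_contraction_factors_eq_0[OF bracket, of x y z T]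
    unfolding \<omega>\<^sub>1_def \<omega>\<^sub>2_def V_def \<eta>_def by simp_all
  show "\<exists>V \<omega>s. open V \<and> p \<in> V \<and> length \<omega>s = 2 \<and>
      (\<forall>\<omega>\<in>set \<omega>s. form_deg 1 \<omega> \<and> holo_form_on \<omega> V) \<and>
      (\<forall>S. \<forall>z\<in>V. \<eta> S z = wedge_list \<omega>s S z) \<and>
      (\<forall>\<omega>\<in>set \<omega>s. \<forall>S. \<forall>z\<in>V. wedge (ext_d \<omega>) \<eta> S z = 0)"
    using \<open>open V\<close> \<open>p \<in> V\<close> deg holo factor frobenius
    by (intro exI[of _ V] exI[of _ "[\<omega>\<^sub>1, \<omega>\<^sub>2]"]) auto
qed

end

lemma enum4_exists: "\<exists>a b c d :: 4. enum4 a b c d"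
proof -
  obtain xs :: "4 list" where xs: "sorted_wrt (<) xs" "set xs = UNIV"
    using ex1_sorted_list_for_set_if_finite[of "UNIV :: 4 set"] by auto
  have "distinct xs" using xs(1) strict_sorted_iff by blast
  then have "length xs = 4" using xs(2) distinct_card by fastforce
  then have "xs = [xs!0, xs!1, xs!2, xs!3]"
    by (intro nth_equalityI) (auto simp: less_Suc_eq numeral_eq_Suc)
  then obtain a b c d where "xs = [a,b,c,d]" by blast
  then have "enum4 a b c d" using xs unfolding enum4_def by auto
  then show ?thesis by blast
qed

theorem mainTheorem15:
  fixes \<eta> :: "4 cform" and X Y :: "complex^4 \<Rightarrow> complex^4"
  assumes "form_deg 2 \<eta>"
    and "homog_deg2_form \<eta>"
    and "integrable_form 2 \<eta>"
    and "ext_d \<eta> = interior X vol_form"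
    and "\<exists>z. X z \<noteq> 0"
    and "linear_vf Y"
    and "\<eta> = interior Y (interior X vol_form)"
  shows "\<forall>s::complex.
     let R = (\<lambda>z. z); \<omega> = interior R \<eta>;
         \<eta>s = (\<lambda>S z. \<eta> S z + s * ext_d \<omega> S z)
     in integrable_form 2 \<eta>s \<and> wedge \<eta>s \<eta>s = (\<lambda>S z. 0) \<and>
        ext_d \<eta>s = interior X vol_form \<and> interior X \<eta>s = (\<lambda>S z. 0)"
proof -
  obtain a b c d :: 4 where "enum4 a b c d" using enum4_exists by blast
  then interpret enum4 a b c d .
  obtain A where X: "X = (\<lambda>z. A *v z)" using ext_d_homog_deg2_linear_field[OF assms(2,4)] by blast
  obtain B where Y: "Y = (\<lambda>z. B *v z)" using linear_vf_matrix[OF assms(6)] by blast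
  have \<eta>: "\<eta> = interior (\<lambda>z. B *v z) (interior (\<lambda>z. A *v z) vol_form)" using assms(7) X Y by simp
  have "interior (div_bracket_field B A) vol_form = interior (\<lambda>z. A *v z) vol_form"
    using assms(4) ext_d_interior2_vol[of B A] unfolding \<eta> X by simp
  then have bracket: "div_bracket_field B A = (\<lambda>z. A *v z)" by (rule interior_vol_form_inject)
  then have R: "\<And>z. div_bracket_field B A z = A *v z" by simp
  then have trace: "trace A = 0" by (rule trace_eq_0_if_div_bracket_field_eq)
  have \<eta>s: "(\<lambda>S z. \<eta> S z + s * ext_d (interior (\<lambda>z. z) \<eta>) S z) =
      interior (\<lambda>z. deform_matrix s B *v z) (interior (\<lambda>z. A *v z) vol_form)" for s
    unfolding deform_matrix_mult interior_lincomb_field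
    by (intro ext) (simp add: \<eta> ext_d_interior_euler bracket algebra_simps)
  have deformed: "div_bracket_field (deform_matrix s B) A = (\<lambda>z. A *v z)" for s
    by (rule ext, rule div_bracket_field_deform_matrix[OF card_UNIV_eq_4 trace R])
  show ?thesis
    unfolding Let_def \<eta>s X ext_d_interior2_vol deformed
    by (simp add: integrable_decomposable[OF lin_bracket_deform_matrix[OF card_UNIV_eq_4 trace R]]
        wedge_self_decomposable interior_decomposable_self)
qed

end
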